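(* Let $\mu$ be a probability measure on $\mathbb{R}^n$ with a log-concave density $f$ that is $1$-unconditional. Then for every convex set $B\subset\mathbb{R}^n$, every $k\in\{1,\dots,n\}$ and every $\epsilon>0$, $$\mu\big((B+\epsilon I_k)\setminus B\big)\leq 2\epsilon\, g_k(0),$$ where $I_k=[-e_k,e_k]$ and $g_k(t)=\int_{\mathbb{R}^{n-1}}f(y,t)\,dy$ is the $k$-th marginal density (writing $x=(y,t)$ with $t=x_k$ and $y\in\mathbb{R}^{n-1}$ the remaining coordinates).
   Context: A density $f$ on $\mathbb{R}^n$ is $1$-unconditional if $f(x_1,\dots,x_n)=f(\epsilon_1x_1,\dots,\epsilon_nx_n)$ for all $\epsilon_i\in\{-1,1\}$; log-concave means $\ln f$ is concave. $e_k$ is the $k$-th standard basis vector. *)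

theory Defs
  imports "HOL-Analysis.Analysis" "HOL-Probability.Probability"
begin

text \<open>Log-concavity of a nonnegative function (ln f concave, with ln 0 = -infinity).\<close>
definition log_concave :: "('a::real_vector \<Rightarrow> real) \<Rightarrow> bool" where
  "log_concave f \<longleftrightarrow> (\<forall>x. 0 \<le> f x) \<and>
     (\<forall>x y. \<forall>t\<in>{0..1::real}. f x powr (1 - t) * f y powr t \<le> f ((1 - t) *\<^sub>R x + t *\<^sub>R y))"

definition unconditional :: "(real^'n \<Rightarrow> real) \<Rightarrow> bool" where
  "unconditional f \<longleftrightarrow>
     (\<forall>(\<epsilon>::'n \<Rightarrow> real) x. (\<forall>i. \<epsilon> i \<in> {-1, 1}) \<longrightarrow> f (\<chi> i. \<epsilon> i * x $ i) = f x)"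

definition marginal :: "(real^'n \<Rightarrow> real) \<Rightarrow> 'n \<Rightarrow> real \<Rightarrow> ennreal" where
  "marginal f k t = (\<integral>\<^sup>+ y. ennreal (f (\<chi> i. if i = k then t else y i))
                       \<partial>(PiM (UNIV - {k}) (\<lambda>_. lborel)))"

end

theory Submission
  imports Defs
begin

text \<open>
  Write \<open>x = (y, t)\<close> with \<open>t = x\<^sub>k\<close>. Since \<open>(y, 0)\<close> is the midpoint of \<open>(y, t)\<close> and its
  reflection \<open>(y, -t)\<close>, unconditionality and log-concavity give \<open>f (y, t) \<le> f (y, 0)\<close>.
  By Fubini it suffices to bound the integral of \<open>f\<close> over each line \<open>{(y, t) | t \<in> \<real>}\<close>.
  The section of the convex set \<open>B\<close> on such a line is an interval, so the section of
  \<open>(B + \<epsilon> I\<^sub>k) - B\<close> lies in two intervals of length \<open>\<epsilon>\<close> at its ends; the line integral is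
  therefore at most \<open>2 \<epsilon> f (y, 0)\<close>, and integrating over \<open>y\<close> gives \<open>2 \<epsilon> g\<^sub>k 0\<close>.
\<close>

definition insert_coord :: "'n \<Rightarrow> ('n \<Rightarrow> real) \<Rightarrow> real \<Rightarrow> real^'n::finite" where
  "insert_coord k y t = (\<chi> i. if i = k then t else y i)"

lemma insert_coord_nth [simp]: "insert_coord k y t $ i = (if i = k then t else y i)"
  by (simp add: insert_coord_def)

lemma insert_coord_eq_add_axis: "insert_coord k y t = insert_coord k y 0 + t *\<^sub>R axis k 1"
  by (simp add: vec_eq_iff axis_def)

lemma measurable_insert_coord:
  "(\<lambda>(y, t). insert_coord k y t) \<in> PiM (UNIV - {k}) (\<lambda>_. lborel) \<Otimes>\<^sub>M lborel \<rightarrow>\<^sub>M borel"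
proof -
  have "(\<lambda>z. insert_coord k (fst z) (snd z) \<bullet> axis i 1)
      \<in> borel_measurable (PiM (UNIV - {k}) (\<lambda>_. lborel) \<Otimes>\<^sub>M lborel)" for i
    by (cases "i = k") (simp_all add: inner_axis measurable_component_singleton)
  then show ?thesis
    by (subst borel_measurable_euclidean_space) (auto simp: Basis_vec_def case_prod_beta')
qed

lemma insert_coord_vimage_box:
  "(\<lambda>(y, t). insert_coord k y t) -` box l u \<inter> space (PiM (UNIV - {k}) (\<lambda>_. lborel) \<Otimes>\<^sub>M lborel)
     = (\<Pi>\<^sub>E i\<in>UNIV - {k}. {l $ i<..<u $ i}) \<times> {l $ k<..<u $ k}"
proof -
  have "(\<forall>i. l $ i < insert_coord k y t $ i \<and> insert_coord k y t $ i < u $ i) \<longleftrightarrow>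
        (\<forall>i\<in>UNIV - {k}. y i \<in> {l $ i<..<u $ i}) \<and> t \<in> {l $ k<..<u $ k}" for y t
    by (metis DiffE DiffI UNIV_I greaterThanLessThan_iff insert_coord_nth singletonD singletonI)
  then show ?thesis
    by (auto simp: mem_box_cart space_pair_measure space_PiM PiE_iff)
qed

lemma lborel_eq_distr_insert_coord:
  "(lborel :: (real^'n::finite) measure)
     = distr (PiM (UNIV - {k}) (\<lambda>_. lborel) \<Otimes>\<^sub>M lborel) borel (\<lambda>(y, t). insert_coord k y t)"
  (is "_ = ?M")
proof (rule lborel_eqI)
  interpret P: finite_product_sigma_finite "\<lambda>_. lborel :: real measure" "UNIV - {k}"
    by standard auto
  fix l u :: "real^'n"
  assume "\<And>b. b \<in> Basis \<Longrightarrow> l \<bullet> b \<le> u \<bullet> b"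
  then have lu: "l $ i \<le> u $ i" for i
    by (metis axis_in_Basis_iff cart_eq_inner_axis Basis_real_def insertI1)
  have "emeasure ?M (box l u)
      = emeasure (PiM (UNIV - {k}) (\<lambda>_. lborel) \<Otimes>\<^sub>M lborel)
          ((\<Pi>\<^sub>E i\<in>UNIV - {k}. {l $ i<..<u $ i}) \<times> {l $ k<..<u $ k})"
    by (simp add: emeasure_distr measurable_insert_coord insert_coord_vimage_box)
  also have "\<dots> = (\<Prod>i\<in>UNIV - {k}. ennreal (u $ i - l $ i)) * ennreal (u $ k - l $ k)"
    using lu by (simp add: lborel.emeasure_pair_measure_Times P.measure_times sets_PiM_I_finite)
  also have "\<dots> = ennreal (\<Prod>i\<in>UNIV. u $ i - l $ i)"
    using lu by (simp add: prod_ennreal ennreal_mult' prod.remove[of UNIV k] mult.commute)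
  also have "(\<Prod>i\<in>UNIV. u $ i - l $ i) = (\<Prod>b\<in>Basis. (u - l) \<bullet> b)"
    by (simp add: Basis_vec_def cart_eq_inner_axis axis_eq_axis prod.UNION_disjoint inner_diff_left)
  finally show "emeasure ?M (box l u) = ennreal (\<Prod>b\<in>Basis. (u - l) \<bullet> b)" .
qed simp

lemma nn_integral_lebesgue_insert_coord:
  fixes F :: "real^'n::finite \<Rightarrow> ennreal"
  assumes F: "F \<in> borel_measurable lebesgue"
  shows "(\<integral>\<^sup>+x. F x \<partial>lebesgue)
    = (\<integral>\<^sup>+y. (\<integral>\<^sup>+t. F (insert_coord k y t) \<partial>lborel) \<partial>PiM (UNIV - {k}) (\<lambda>_. lborel))"
proof -
  let ?P = "PiM (UNIV - {k}) (\<lambda>_. lborel :: real measure)"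
  interpret P: finite_product_sigma_finite "\<lambda>_. lborel :: real measure" "UNIV - {k}"
    by standard auto
  interpret pair_sigma_finite ?P "lborel :: real measure" by standard
  obtain G where G: "G \<in> borel_measurable lborel" and FG: "AE x in lborel. F x = G x"
    using completion_ex_borel_measurable[OF F] by auto
  have G_insert: "(\<lambda>(y, t). G (insert_coord k y t)) \<in> borel_measurable (?P \<Otimes>\<^sub>M lborel)"
    using measurable_compose[OF measurable_insert_coord] G by (simp add: case_prod_beta')
  have "AE z in ?P \<Otimes>\<^sub>M lborel.
      F (case z of (y, t) \<Rightarrow> insert_coord k y t) = G (case z of (y, t) \<Rightarrow> insert_coord k y t)"
    by (rule AE_distrD[OF measurable_insert_coord]) (metis FG lborel_eq_distr_insert_coord)
  then have FG_sections: "AE y in ?P. AE t in lborel. F (insert_coord k y t) = G (insert_coord k y t)"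
    by (auto dest: AE_pair)
  have "(\<integral>\<^sup>+x. F x \<partial>lebesgue) = (\<integral>\<^sup>+x. G x \<partial>lborel)"
    using FG by (simp add: nn_integral_completion AE_completion nn_integral_cong_AE)
  also have "\<dots> = (\<integral>\<^sup>+z. G (case z of (y, t) \<Rightarrow> insert_coord k y t) \<partial>(?P \<Otimes>\<^sub>M lborel))"
    using G by (subst lborel_eq_distr_insert_coord[of k])
      (simp add: nn_integral_distr measurable_insert_coord)
  also have "\<dots> = (\<integral>\<^sup>+y. (\<integral>\<^sup>+t. G (insert_coord k y t) \<partial>lborel) \<partial>?P)"
    using sigma_finite_measure.nn_integral_fst[OF sigma_finite_lborel G_insert]
    by (simp add: case_prod_beta')
  also have "\<dots> = (\<integral>\<^sup>+y. (\<integral>\<^sup>+t. F (insert_coord k y t) \<partial>lborel) \<partial>?P)"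
    using FG_sections by (auto intro!: nn_integral_cong_AE elim!: eventually_mono)
  finally show ?thesis .
qed

text \<open>Unlike \<open>nn_integral_cmult\<close>, no measurability of \<open>g\<close> is required: the
  restriction of \<open>f\<close> to a hyperplane need not be measurable.\<close>
lemma nn_integral_cmult_le:
  fixes c :: ennreal
  assumes "c \<noteq> \<infinity>"
  shows "(\<integral>\<^sup>+x. c * g x \<partial>M) \<le> c * integral\<^sup>N M g"
proof (cases "c = 0")
  case False
  have cancel: "c * (a / c) = a" for a
    using False assms by (simp add: ennreal_times_divide mult.commute mult_divide_eq_ennreal)
  show ?thesis
    unfolding nn_integral_def[of M "\<lambda>x. c * g x"]
  proof (rule SUP_least, clarify)
    fix s assume s: "simple_function M s" "s \<le> (\<lambda>x. c * g x)"
    have s_div: "simple_function M (\<lambda>x. s x / c)"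
      using s(1) by (rule simple_function_compose1)
    have "integral\<^sup>S M s = c * integral\<^sup>S M (\<lambda>x. s x / c)"
      using simple_integral_mult[OF s_div, of c] by (simp add: cancel)
    also have "integral\<^sup>S M (\<lambda>x. s x / c) = (\<integral>\<^sup>+x. s x / c \<partial>M)"
      using s_div by (simp add: nn_integral_eq_simple_integral)
    also have "\<dots> \<le> integral\<^sup>N M g"
      using s(2) False
      by (intro nn_integral_mono divide_le_posI_ennreal) (auto simp: le_fun_def zero_less_iff_neq_zero)
    finally show "integral\<^sup>S M s \<le> c * integral\<^sup>N M g"
      by (simp add: mult_left_mono)
  qed
qed simp

lemma log_concave_unconditional_le_coord_zero:
  fixes f :: "real^'n::finite \<Rightarrow> real"
  assumes lc: "log_concave f" and unc: "unconditional f"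
  shows "f x \<le> f (\<chi> i. if i = k then 0 else x $ i)"
proof -
  let ?x' = "\<chi> i. (if i = k then -1 else 1) * x $ i"
  have "f ?x' = f x"
    using unc unfolding unconditional_def
    by (erule_tac x="\<lambda>i. if i = k then -1 else 1" in allE) auto
  then have "f x = f x powr (1 - 1/2) * f ?x' powr (1/2)"
    using lc by (simp add: log_concave_def flip: powr_add)
  also have "\<dots> \<le> f ((1 - 1/2) *\<^sub>R x + (1/2) *\<^sub>R ?x')"
    by (rule lc[unfolded log_concave_def, THEN conjunct2, rule_format]) simp
  also have "(1 - 1/2) *\<^sub>R x + (1/2) *\<^sub>R ?x' = (\<chi> i. if i = k then 0 else x $ i)"
    by (simp add: vec_eq_iff)
  finally show ?thesis .
qed

lemma convex_real_thickening_diff_subset: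
  fixes C :: "real set"
  assumes "convex C"
  shows "{t. \<exists>u\<in>C. \<bar>t - u\<bar> \<le> e} - C \<subseteq> {Inf C - e..Inf C} \<union> {Sup C..Sup C + e}"
proof
  fix t assume "t \<in> {t. \<exists>u\<in>C. \<bar>t - u\<bar> \<le> e} - C"
  then obtain u where u: "u \<in> C" "\<bar>t - u\<bar> \<le> e" and "t \<notin> C" by auto
  then have no_straddle: "\<not> (v \<le> t \<and> t \<le> w)" if "v \<in> C" "w \<in> C" for v w
    using assms that by (metis is_interval_1 is_interval_convex_1)
  show "t \<in> {Inf C - e..Inf C} \<union> {Sup C..Sup C + e}"
  proof (cases "\<forall>v\<in>C. t < v")
    case True
    then have "bdd_below C"
      unfolding bdd_below_def using less_imp_le by blast
    then have "t \<le> Inf C" and "Inf C \<le> u"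
      using True u(1) by (auto intro: cInf_greatest cInf_lower less_imp_le)
    then show ?thesis using u(2) by auto
  next
    case False
    then obtain v where "v \<in> C" "v \<le> t" by (auto simp: not_less)
    then have below: "\<forall>w\<in>C. w \<le> t" using no_straddle by (meson linear)
    then have "bdd_above C"
      unfolding bdd_above_def by blast
    then have "Sup C \<le> t" and "u \<le> Sup C"
      using below u(1) by (auto intro: cSup_least cSup_upper)
    then show ?thesis using u(2) by auto
  qed
qed

lemma convex_line_preimage:
  fixes B :: "'a::real_vector set"
  assumes "convex B"
  shows "convex {t. x + t *\<^sub>R v \<in> B}"
proof (rule convexI)
  fix a b u w :: real
  assume "a \<in> {t. x + t *\<^sub>R v \<in> B}" "b \<in> {t. x + t *\<^sub>R v \<in> B}" "0 \<le> u" "0 \<le> w" "u + w = 1"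
  moreover have "x + (u * a + w * b) *\<^sub>R v = u *\<^sub>R (x + a *\<^sub>R v) + w *\<^sub>R (x + b *\<^sub>R v)"
    using \<open>u + w = 1\<close> by (simp add: algebra_simps flip: scaleR_add_left)
  ultimately show "u *\<^sub>R a + w *\<^sub>R b \<in> {t. x + t *\<^sub>R v \<in> B}"
    using assms by (simp add: convexD)
qed

lemma line_preimage_thickening:
  fixes x v :: "'a::real_vector"
  shows "{t. x + t *\<^sub>R v \<in> {b + s *\<^sub>R v | b s. b \<in> B \<and> s \<in> {-e..e}}}
     = {t. \<exists>u\<in>{u. x + u *\<^sub>R v \<in> B}. \<bar>t - u\<bar> \<le> e}"
proof -
  have shift: "x + t *\<^sub>R v = b + s *\<^sub>R v \<longleftrightarrow> b = x + (t - s) *\<^sub>R v" for t s and b :: 'a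
    unfolding scaleR_diff_left by (metis add_diff_eq eq_diff_eq)
  show ?thesis
  proof (intro set_eqI iffI)
    fix t assume "t \<in> {t. x + t *\<^sub>R v \<in> {b + s *\<^sub>R v | b s. b \<in> B \<and> s \<in> {-e..e}}}"
    then obtain b s where "x + t *\<^sub>R v = b + s *\<^sub>R v" "b \<in> B" "s \<in> {-e..e}" by blast
    then show "t \<in> {t. \<exists>u\<in>{u. x + u *\<^sub>R v \<in> B}. \<bar>t - u\<bar> \<le> e}"
      by (intro CollectI bexI[of _ "t - s"]) (auto simp: shift)
  next
    fix t assume "t \<in> {t. \<exists>u\<in>{u. x + u *\<^sub>R v \<in> B}. \<bar>t - u\<bar> \<le> e}"
    then obtain u where "x + u *\<^sub>R v \<in> B" "\<bar>t - u\<bar> \<le> e" by blast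
    moreover have "x + t *\<^sub>R v = (x + u *\<^sub>R v) + (t - u) *\<^sub>R v" and "t - u \<in> {-e..e}"
      using \<open>\<bar>t - u\<bar> \<le> e\<close> by (auto simp: shift)
    ultimately show "t \<in> {t. x + t *\<^sub>R v \<in> {b + s *\<^sub>R v | b s. b \<in> B \<and> s \<in> {-e..e}}}"
      by blast
  qed
qed

lemma convex_line_fringe_subset:
  fixes B :: "'a::real_vector set"
  assumes "convex B"
  shows "\<exists>a b. {t. x + t *\<^sub>R v \<in> {b + s *\<^sub>R v | b s. b \<in> B \<and> s \<in> {-e..e}} - B}
           \<subseteq> {a - e..a} \<union> {b..b + e}"
proof -
  let ?C = "{u. x + u *\<^sub>R v \<in> B}"
  have "{t. x + t *\<^sub>R v \<in> {b + s *\<^sub>R v | b s. b \<in> B \<and> s \<in> {-e..e}} - B}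
      = {t. \<exists>u\<in>?C. \<bar>t - u\<bar> \<le> e} - ?C"
    using line_preimage_thickening[of x v B e] by blast
  also have "\<dots> \<subseteq> {Inf ?C - e..Inf ?C} \<union> {Sup ?C..Sup ?C + e}"
    by (intro convex_real_thickening_diff_subset convex_line_preimage assms)
  finally show ?thesis by blast
qed

lemma nn_integral_section_fringe_le:
  fixes f :: "real^'n::finite \<Rightarrow> real" and k :: 'n
  assumes lc: "log_concave f" and unc: "unconditional f" and "convex B" and "0 \<le> e"
  defines "S \<equiv> {b + s *\<^sub>R axis k 1 | b s. b \<in> B \<and> s \<in> {-e..e}} - B"
  shows "(\<integral>\<^sup>+t. ennreal (f (insert_coord k y t)) * indicator S (insert_coord k y t) \<partial>lborel)
    \<le> ennreal (2 * e) * ennreal (f (insert_coord k y 0))"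
proof -
  obtain a b where ab: "{t. insert_coord k y 0 + t *\<^sub>R axis k 1 \<in> S} \<subseteq> {a - e..a} \<union> {b..b + e}"
    using convex_line_fringe_subset[OF \<open>convex B\<close>] unfolding S_def by blast
  have "ennreal (f (insert_coord k y t)) * indicator S (insert_coord k y t)
      \<le> ennreal (f (insert_coord k y 0)) * indicator ({a - e..a} \<union> {b..b + e}) t" for t
  proof -
    have "(\<chi> i. if i = k then 0 else insert_coord k y t $ i) = insert_coord k y 0"
      by (simp add: vec_eq_iff)
    then have "f (insert_coord k y t) \<le> f (insert_coord k y 0)"
      using log_concave_unconditional_le_coord_zero[OF lc unc, of "insert_coord k y t" k] by simp
    then show ?thesis
      using ab insert_coord_eq_add_axis[of k y t] by (auto simp: indicator_def intro: ennreal_leI)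
  qed
  then have "(\<integral>\<^sup>+t. ennreal (f (insert_coord k y t)) * indicator S (insert_coord k y t) \<partial>lborel)
      \<le> ennreal (f (insert_coord k y 0)) * emeasure lborel ({a - e..a} \<union> {b..b + e})"
    by (auto intro: nn_integral_mono simp flip: nn_integral_cmult_indicator)
  also have "\<dots> \<le> ennreal (f (insert_coord k y 0)) * ennreal (2 * e)"
  proof (rule mult_left_mono)
    have "emeasure lborel ({a - e..a} \<union> {b..b + e})
        \<le> emeasure lborel {a - e..a} + emeasure lborel {b..b + e}"
      by (rule emeasure_subadditive) auto
    also have "\<dots> = ennreal (2 * e)"
      using \<open>0 \<le> e\<close> by (simp flip: ennreal_plus)
    finally show "emeasure lborel ({a - e..a} \<union> {b..b + e}) \<le> ennreal (2 * e)" .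
  qed simp
  finally show ?thesis
    by (simp add: mult.commute)
qed

theorem lemma5p6:
  fixes f :: "real^'n \<Rightarrow> real" and B :: "(real^'n) set" and k :: 'n and \<epsilon> :: real
  assumes meas: "f \<in> borel_measurable lebesgue"
    and lc: "log_concave f"
    and unc: "unconditional f"
    and prob: "(\<integral>\<^sup>+ x. ennreal (f x) \<partial>lebesgue) = 1"
    and cvx: "convex B"
    and eps: "\<epsilon> > 0"
  shows "emeasure (density lebesgue f)
           ({b + s *\<^sub>R axis k 1 | b s. b \<in> B \<and> s \<in> {-\<epsilon>..\<epsilon>}} - B)
         \<le> ennreal (2 * \<epsilon>) * marginal f k 0"
proof -
  let ?S = "{b + s *\<^sub>R axis k 1 | b s. b \<in> B \<and> s \<in> {-\<epsilon>..\<epsilon>}} - B"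
  show ?thesis
  proof (cases "?S \<in> sets lebesgue")
    case False
    then show ?thesis by (simp add: emeasure_notin_sets)
  next
    case True
    have "emeasure (density lebesgue f) ?S = (\<integral>\<^sup>+x. ennreal (f x) * indicator ?S x \<partial>lebesgue)"
      using meas True by (simp add: emeasure_density)
    also have "\<dots> = (\<integral>\<^sup>+y. (\<integral>\<^sup>+t. ennreal (f (insert_coord k y t))
                          * indicator ?S (insert_coord k y t) \<partial>lborel) \<partial>PiM (UNIV - {k}) (\<lambda>_. lborel))"
      by (rule nn_integral_lebesgue_insert_coord) (use meas True in measurable)
    also have "\<dots> \<le> (\<integral>\<^sup>+y. ennreal (2 * \<epsilon>) * ennreal (f (insert_coord k y 0))
                         \<partial>PiM (UNIV - {k}) (\<lambda>_. lborel))"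
      using eps by (intro nn_integral_mono nn_integral_section_fringe_le lc unc cvx) simp
    also have "\<dots> \<le> ennreal (2 * \<epsilon>) * marginal f k 0"
      unfolding marginal_def insert_coord_def by (rule nn_integral_cmult_le) simp
    finally show ?thesis .
  qed
qed

end
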